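(* Let $d,r:\mathbb{N}\to\mathbb{N}$ be functions such that $d$ is nondecreasing, takes only odd values at least $5$, and $d(n)\ge2r(n)+1$ for all $n$. Let $\alpha_n=(1\;2\;\cdots\;d(n))$, $\beta_n=(1\;(1+r(n))\;(1+2r(n)))\in\mathrm{Alt}(d(n))$, let $\alpha=(\alpha_n)_n,\beta=(\beta_n)_n\in\prod_n\mathrm{Alt}(d(n))$, $G=\langle\alpha,\beta\rangle$, let $\pi_n:\prod_k\mathrm{Alt}(d(k))\to\mathrm{Alt}(d(n))$ be the projection, and for $m\ge0$ let $L_m=\langle\alpha^j\beta\alpha^{-j}:|j|\le m\rangle\le G$. If $n$ is such that $\langle\alpha_n,\beta_n\rangle=\mathrm{Alt}(d(n))$, then $\pi_n(L_m)=\mathrm{Alt}(d(n))$ for all $m\ge d(n)\log d(n)/\log 2$.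
   Context: $\mathbb{N}=\{1,2,3,\dots\}$. *)

theory Defs
  imports "HOL-Algebra.Sym_Groups" "HOL-Algebra.Product_Groups" "HOL-Algebra.Generated_Groups"
    "HOL-Combinatorics.Cycles" Complex_Main
begin

abbreviation Nat1 :: "nat set" where "Nat1 \<equiv> {1..}"

definition AltProd :: "(nat \<Rightarrow> nat) \<Rightarrow> (nat \<Rightarrow> nat \<Rightarrow> nat) monoid" where
  "AltProd d = product_group Nat1 (\<lambda>n. alt_group (d n))"

definition alpha_n :: "(nat \<Rightarrow> nat) \<Rightarrow> nat \<Rightarrow> nat \<Rightarrow> nat" where
  "alpha_n d n = cycle_of_list [1..<d n + 1]"

definition beta_n :: "(nat \<Rightarrow> nat) \<Rightarrow> nat \<Rightarrow> nat \<Rightarrow> nat" where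
  "beta_n r n = cycle_of_list [1, 1 + r n, 1 + 2 * r n]"

definition alpha :: "(nat \<Rightarrow> nat) \<Rightarrow> nat \<Rightarrow> nat \<Rightarrow> nat" where
  "alpha d = (\<lambda>n\<in>Nat1. alpha_n d n)"

definition beta :: "(nat \<Rightarrow> nat) \<Rightarrow> nat \<Rightarrow> nat \<Rightarrow> nat" where
  "beta r = (\<lambda>n\<in>Nat1. beta_n r n)"

definition L :: "(nat \<Rightarrow> nat) \<Rightarrow> (nat \<Rightarrow> nat) \<Rightarrow> nat \<Rightarrow> (nat \<Rightarrow> nat \<Rightarrow> nat) set" where
  "L d r m = generate (AltProd d)
     {alpha d [^]\<^bsub>AltProd d\<^esub> j \<otimes>\<^bsub>AltProd d\<^esub> beta r \<otimes>\<^bsub>AltProd d\<^esub> alpha d [^]\<^bsub>AltProd d\<^esub> (- j)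
      | j :: int. \<bar>j\<bar> \<le> int m}"

definition proj :: "nat \<Rightarrow> (nat \<Rightarrow> nat \<Rightarrow> nat) \<Rightarrow> nat \<Rightarrow> nat" where
  "proj n x = x n"

end

theory Submission
  imports Defs "HOL-Algebra.Elementary_Groups"
begin

text \<open>Since \<alpha>(n) has order d(n) \<le> m, the projection of L(m) is generated by all conjugates
  of \<beta>(n) by powers of \<alpha>(n). The subgroup they generate contains \<beta>(n) and is normalised by
  \<alpha>(n), so it is normal in Alt(d(n)) = \<langle>\<alpha>(n), \<beta>(n)\<rangle> with a cyclic, hence abelian, quotient.
  Since Alt(d(n)) is perfect for d(n) \<ge> 5, this quotient is trivial.\<close>

definition power_conjugates :: "('a, 'b) monoid_scheme \<Rightarrow> 'a \<Rightarrow> 'a \<Rightarrow> int set \<Rightarrow> 'a set" where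
  "power_conjugates G a b J = (\<lambda>j. a [^]\<^bsub>G\<^esub> j \<otimes>\<^bsub>G\<^esub> b \<otimes>\<^bsub>G\<^esub> a [^]\<^bsub>G\<^esub> (- j)) ` J"

lemma (in group) power_conjugates_subset_carrier:
  assumes "a \<in> carrier G" "b \<in> carrier G"
  shows "power_conjugates G a b J \<subseteq> carrier G"
  using assms unfolding power_conjugates_def by auto

lemma (in group) self_in_power_conjugates:
  assumes "b \<in> carrier G" and "0 \<in> J"
  shows "b \<in> power_conjugates G a b J"
  using assms unfolding power_conjugates_def by (auto intro!: image_eqI[where x = 0])

lemma (in group) conj_power_conjugate:
  assumes a: "a \<in> carrier G" and b: "b \<in> carrier G"
  shows "a [^] (k::int) \<otimes> (a [^] (j::int) \<otimes> b \<otimes> a [^] (- j)) \<otimes> inv (a [^] k)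
       = a [^] (k + j) \<otimes> b \<otimes> a [^] (- (k + j))"
proof -
  have "a [^] k \<otimes> (a [^] j \<otimes> b \<otimes> a [^] (- j)) \<otimes> inv (a [^] k)
      = (a [^] k \<otimes> a [^] j) \<otimes> b \<otimes> (a [^] (- j) \<otimes> a [^] (- k))"
    using a b by (simp add: m_assoc int_pow_neg)
  also have "\<dots> = a [^] (k + j) \<otimes> b \<otimes> a [^] (- (k + j))"
    using a by (simp add: int_pow_mult[symmetric] add.commute)
  finally show ?thesis .
qed

lemma (in group) conj_generate_closed:
  assumes T: "T \<subseteq> carrier G" and g: "g \<in> carrier G"
    and conj_T: "\<And>x. x \<in> T \<Longrightarrow> g \<otimes> x \<otimes> inv g \<in> generate G T"
    and y: "y \<in> generate G T"
  shows "g \<otimes> y \<otimes> inv g \<in> generate G T"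
  using y
proof (induction y rule: generate.induct)
  case one
  then show ?case using g generate.one by simp
next
  case (incl h)
  then show ?case by (rule conj_T)
next
  case (inv h)
  have "inv (g \<otimes> h \<otimes> inv g) = g \<otimes> inv h \<otimes> inv g"
    using inv T g by (auto simp add: inv_mult_group m_assoc)
  then show ?case
    using generate_m_inv_closed[OF T conj_T[OF inv]] by simp
next
  case (eng h1 h2)
  have "h1 \<in> carrier G" "h2 \<in> carrier G"
    using eng.hyps generate_in_carrier[OF T] by auto
  then have "g \<otimes> (h1 \<otimes> h2) \<otimes> inv g = (g \<otimes> h1 \<otimes> inv g) \<otimes> (g \<otimes> h2 \<otimes> inv g)"
    using g by (simp add: inv_solve_left m_assoc)
  then show ?case
    using generate.eng[OF eng.IH] by simp
qed

lemma (in group) normal_if_conj_closed_by_generators: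
  assumes H: "subgroup H G" and S: "generate G S = carrier G"
    and conj_S: "\<And>s y. s \<in> S \<Longrightarrow> y \<in> H \<Longrightarrow> s \<otimes> y \<otimes> inv s \<in> H \<and> inv s \<otimes> y \<otimes> s \<in> H"
  shows "H \<lhd> G"
proof (rule normal_invI[OF H])
  fix g y assume "g \<in> carrier G" "y \<in> H"
  then have "g \<in> generate G S" using S by simp
  then show "g \<otimes> y \<otimes> inv g \<in> H" using \<open>y \<in> H\<close>
  proof (induction g arbitrary: y rule: generate.induct)
    case one
    then show ?case using subgroup.mem_carrier[OF H] by simp
  next
    case (incl s)
    then show ?case using conj_S by blast
  next
    case (inv s)
    have "s \<in> carrier G" using generate.incl[OF inv.hyps, where G = G] S by simp
    then show ?case using conj_S[OF inv.hyps inv.prems] by simp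
  next
    case (eng h1 h2)
    have "h1 \<in> carrier G" "h2 \<in> carrier G" "y \<in> carrier G"
      using eng.hyps eng.prems S subgroup.mem_carrier[OF H] by auto
    then have "h1 \<otimes> h2 \<otimes> y \<otimes> inv (h1 \<otimes> h2) = h1 \<otimes> (h2 \<otimes> y \<otimes> inv h2) \<otimes> inv h1"
      by (simp add: m_assoc inv_mult_group)
    then show ?case using eng.IH eng.prems by simp
  qed
qed

lemma (in group) generate_power_conjugates_normal:
  assumes a: "a \<in> carrier G" and b: "b \<in> carrier G" and gen: "generate G {a, b} = carrier G"
  shows "generate G (power_conjugates G a b UNIV) \<lhd> G"
proof -
  let ?T = "power_conjugates G a b UNIV"
  have T: "?T \<subseteq> carrier G" by (rule power_conjugates_subset_carrier[OF a b])
  have H: "subgroup (generate G ?T) G" by (rule generate_is_subgroup[OF T])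
  have b_in: "b \<in> generate G ?T"
    using self_in_power_conjugates[OF b] by (simp add: generate.incl)
  have conj_a_pow: "a [^] k \<otimes> y \<otimes> inv (a [^] k) \<in> generate G ?T"
    if "y \<in> generate G ?T" for y and k :: int
  proof (rule conj_generate_closed[OF T _ _ that])
    fix x assume "x \<in> ?T"
    then obtain j :: int where "x = a [^] j \<otimes> b \<otimes> a [^] (- j)" unfolding power_conjugates_def by auto
    then have "a [^] k \<otimes> x \<otimes> inv (a [^] k) \<in> ?T"
      using conj_power_conjugate[OF a b] unfolding power_conjugates_def
      by (auto intro!: image_eqI[where x = "k + j"])
    then show "a [^] k \<otimes> x \<otimes> inv (a [^] k) \<in> generate G ?T" by (rule generate.incl)
  qed (use a in simp)
  show ?thesis
  proof (rule normal_if_conj_closed_by_generators[OF H gen])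
    fix s y assume s: "s \<in> {a, b}" and y: "y \<in> generate G ?T"
    show "s \<otimes> y \<otimes> inv s \<in> generate G ?T \<and> inv s \<otimes> y \<otimes> s \<in> generate G ?T"
    proof (cases "s = a")
      case True
      then show ?thesis
        using conj_a_pow[OF y, of 1] conj_a_pow[OF y, of "- 1"] a by (simp add: int_pow_neg)
    next
      case False
      then have "s = b" using s by simp
      then show ?thesis
        using b_in y H by (simp add: subgroup.m_closed subgroup.m_inv_closed)
    qed
  qed
qed

lemma (in normal) cyclic_FactGroup:
  assumes a: "a \<in> carrier G" and b: "b \<in> H" and gen: "generate G {a, b} = carrier G"
  shows "cyclic_group (G Mod H)"
proof -
  let ?Q = "G Mod H" and ?p = "\<lambda>x. H #> x"
  interpret Q: group ?Q by (rule factorgroup_is_group)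
  interpret p: group_hom G ?Q ?p
    using r_coset_hom_Mod by (simp add: group_hom_def group_hom_axioms_def is_group)
  have b_carrier: "b \<in> carrier G" using b subset by blast
  have p_b: "?p b = \<one>\<^bsub>?Q\<^esub>" using b by (simp add: rcos_const)
  have "carrier ?Q = ?p ` carrier G"
    unfolding FactGroup_def RCOSETS_def by auto
  also have "\<dots> = generate ?Q {?p a, ?p b}"
    using p.generate_img[of "{a, b}"] a b_carrier gen by simp
  also have "\<dots> \<subseteq> generate ?Q {?p a}"
  proof (rule Q.generate_subgroup_incl[OF _ Q.generate_is_subgroup])
    have "?p a \<in> generate ?Q {?p a}" by (rule generate.incl) simp
    moreover have "?p b \<in> generate ?Q {?p a}" unfolding p_b by (rule generate.one)
    ultimately show "{?p a, ?p b} \<subseteq> generate ?Q {?p a}" by simp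
  qed (use a in simp)
  also have "\<dots> = range (\<lambda>k::int. ?p a [^]\<^bsub>?Q\<^esub> k)"
    using Q.generate_pow[of "?p a"] a by auto
  finally have "carrier ?Q \<subseteq> range (\<lambda>k::int. ?p a [^]\<^bsub>?Q\<^esub> k)" .
  then have "carrier ?Q = range (\<lambda>k::int. ?p a [^]\<^bsub>?Q\<^esub> k)"
    using a by auto
  then show ?thesis
    unfolding Q.cyclic_group using p.hom_closed[OF a] by (rule bexI)
qed

theorem (in group) perfect_generate_power_conjugates:
  assumes a: "a \<in> carrier G" and b: "b \<in> carrier G" and gen: "generate G {a, b} = carrier G"
    and perfect: "derived G (carrier G) = carrier G"
  shows "generate G (power_conjugates G a b UNIV) = carrier G"
proof -
  let ?H = "generate G (power_conjugates G a b UNIV)"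
  have normal: "?H \<lhd> G" by (rule generate_power_conjugates_normal[OF a b gen])
  interpret H: normal ?H G by (rule normal)
  have "b \<in> ?H"
    using self_in_power_conjugates[OF b] by (simp add: generate.incl)
  then have "comm_group (G Mod ?H)"
    by (rule group.cyclic_imp_abelian_group[OF H.factorgroup_is_group H.cyclic_FactGroup[OF a _ gen]])
  then have "carrier G \<subseteq> ?H" using derived_minimal[OF normal] perfect by simp
  then show ?thesis using H.subset by blast
qed

lemma (in group) int_pow_mod_order:
  assumes a: "a \<in> carrier G" and order: "a [^] (p::nat) = \<one>"
  shows "a [^] (i mod int p) = a [^] i"
proof -
  have "a [^] i = a [^] (int p * (i div int p) + i mod int p)" by simp
  also have "\<dots> = (a [^] int p) [^] (i div int p) \<otimes> a [^] (i mod int p)"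
    by (simp only: int_pow_mult[OF a] int_pow_pow[OF a])
  also have "\<dots> = a [^] (i mod int p)" using a order by (simp add: int_pow_int)
  finally show ?thesis by (rule sym)
qed

lemma (in group) power_conjugates_periodic:
  assumes a: "a \<in> carrier G" and order: "a [^] (p::nat) = \<one>" and p: "0 < p" "p \<le> m"
  shows "power_conjugates G a b UNIV = power_conjugates G a b {- int m..int m}"
proof
  show "power_conjugates G a b UNIV \<subseteq> power_conjugates G a b {- int m..int m}"
  proof
    fix x assume "x \<in> power_conjugates G a b UNIV"
    then obtain j :: int where x: "x = a [^] j \<otimes> b \<otimes> a [^] (- j)"
      unfolding power_conjugates_def by auto
    have "a [^] (- j) = a [^] (- (j mod int p))"
      using a int_pow_mod_order[OF a order, of j] by (simp add: int_pow_neg)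
    then have "x = a [^] (j mod int p) \<otimes> b \<otimes> a [^] (- (j mod int p))"
      using int_pow_mod_order[OF a order, of j] x by simp
    moreover have "j mod int p \<in> {- int m..int m}"
    proof -
      have "0 \<le> j mod int p" "j mod int p < int p" "int p \<le> int m" using p by simp_all
      then show ?thesis unfolding atLeastAtMost_iff by linarith
    qed
    ultimately show "x \<in> power_conjugates G a b {- int m..int m}"
      unfolding power_conjugates_def by blast
  qed
qed (simp add: power_conjugates_def image_mono)

lemma (in group_hom) power_conjugates_img:
  assumes "a \<in> carrier G" "b \<in> carrier G"
  shows "h ` power_conjugates G a b J = power_conjugates H (h a) (h b) J"
  using assms unfolding power_conjugates_def image_image by (simp add: hom_int_pow)

lemma product_group_projection_hom:
  assumes "i \<in> I"
  shows "(\<lambda>x. x i) \<in> hom (product_group I G) (G i)"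
  using assms by (auto simp: hom_def PiE_iff)

lemma alt_group_nat_pow: "x [^]\<^bsub>alt_group n\<^esub> (k::nat) = x ^^ k"
  by (induction k) (simp_all add: alt_group_mult alt_group_one funpow_swap1)

lemma cycle_of_list_in_alt_group:
  assumes "cycle cs" and "odd (length cs)" and "set cs \<subseteq> {1..n}"
  shows "cycle_of_list cs \<in> carrier (alt_group n)"
proof -
  have "swapidseq (length cs - 1) (cycle_of_list cs)"
    by (rule swapidseq_ext_imp_swapidseq[OF swapidseq_ext_of_cycles[OF assms(1)]])
  then have "evenperm (cycle_of_list cs)"
    using assms(2) by (simp add: evenperm_unique)
  moreover have "cycle_of_list cs permutes {1..n}"
    using cycle_permutes permutes_subset assms(3) by blast
  ultimately show ?thesis by (simp add: alt_group_carrier)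
qed

lemma alpha_n_in_alt_group:
  assumes "odd (d k)"
  shows "alpha_n d k \<in> carrier (alt_group (d k))"
  unfolding alpha_n_def using odd_pos[OF assms] assms by (intro cycle_of_list_in_alt_group) auto

lemma beta_n_in_alt_group:
  assumes "1 \<le> r k" and "2 * r k + 1 \<le> d k"
  shows "beta_n r k \<in> carrier (alt_group (d k))"
  unfolding beta_n_def using assms by (intro cycle_of_list_in_alt_group) auto

lemma alpha_n_pow_order: "alpha_n d k [^]\<^bsub>alt_group (d k)\<^esub> d k = \<one>\<^bsub>alt_group (d k)\<^esub>"
proof -
  have "cycle_of_list [1..<d k + 1] ^^ length [1..<d k + 1] = id"
    by (rule cycle_is_id_root) simp
  then show ?thesis by (simp add: alpha_n_def alt_group_nat_pow alt_group_one del: upt_Suc)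
qed

lemma alpha_in_AltProd:
  assumes "\<And>k. 1 \<le> k \<Longrightarrow> odd (d k)"
  shows "alpha d \<in> carrier (AltProd d)"
  using assms alpha_n_in_alt_group by (auto simp: AltProd_def alpha_def)

lemma beta_in_AltProd:
  assumes "\<And>k. 1 \<le> k \<Longrightarrow> 1 \<le> r k" and "\<And>k. 1 \<le> k \<Longrightarrow> 2 * r k + 1 \<le> d k"
  shows "beta r \<in> carrier (AltProd d)"
  using assms beta_n_in_alt_group by (auto simp: AltProd_def beta_def)

lemma L_eq_generate_power_conjugates:
  "L d r m = generate (AltProd d) (power_conjugates (AltProd d) (alpha d) (beta r) {- int m..int m})"
  unfolding L_def power_conjugates_def by (auto simp: abs_le_iff intro!: arg_cong[where f = "generate _"])

lemma proj_group_hom: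
  assumes "1 \<le> n"
  shows "group_hom (AltProd d) (alt_group (d n)) (proj n)"
  using product_group_projection_hom[of n Nat1 "\<lambda>k. alt_group (d k)"] assms
  by (simp add: group_hom_def group_hom_axioms_def AltProd_def alt_group_is_group proj_def[abs_def])

lemma proj_L_eq_generate_power_conjugates:
  assumes n: "1 \<le> n" and alpha: "alpha d \<in> carrier (AltProd d)" and beta: "beta r \<in> carrier (AltProd d)"
  shows "proj n ` L d r m = generate (alt_group (d n))
           (power_conjugates (alt_group (d n)) (alpha_n d n) (beta_n r n) {- int m..int m})"
proof -
  interpret proj: group_hom "AltProd d" "alt_group (d n)" "proj n" by (rule proj_group_hom[OF n])
  have "proj n (alpha d) = alpha_n d n" "proj n (beta r) = beta_n r n"
    using n by (simp_all add: proj_def alpha_def beta_def)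
  then have "proj n ` power_conjugates (AltProd d) (alpha d) (beta r) J
      = power_conjugates (alt_group (d n)) (alpha_n d n) (beta_n r n) J" for J
    by (simp add: proj.power_conjugates_img[OF alpha beta])
  then show ?thesis
    unfolding L_eq_generate_power_conjugates
    using proj.generate_img[OF proj.G.power_conjugates_subset_carrier[OF alpha beta]] by simp
qed

lemma self_le_mult_log2:
  fixes x :: real
  assumes "2 \<le> x"
  shows "x \<le> x * ln x / ln 2"
proof -
  have "1 \<le> ln x / ln 2" using assms by simp
  then have "x * 1 \<le> x * (ln x / ln 2)" using assms by (intro mult_left_mono) auto
  then show ?thesis by simp
qed

theorem lemma3p3:
  fixes d r :: "nat \<Rightarrow> nat" and n m :: nat
  assumes d_mono: "\<And>a b. 1 \<le> a \<Longrightarrow> a \<le> b \<Longrightarrow> d a \<le> d b"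
    and d_odd: "\<And>k. 1 \<le> k \<Longrightarrow> odd (d k)"
    and d_ge5: "\<And>k. 1 \<le> k \<Longrightarrow> d k \<ge> 5"
    and r_pos: "\<And>k. 1 \<le> k \<Longrightarrow> r k \<ge> 1"
    and d_r: "\<And>k. 1 \<le> k \<Longrightarrow> d k \<ge> 2 * r k + 1"
    and n_pos: "1 \<le> n"
    and gen: "generate (alt_group (d n)) {alpha_n d n, beta_n r n} = carrier (alt_group (d n))"
    and m_big: "real m \<ge> real (d n) * ln (real (d n)) / ln 2"
  shows "proj n ` L d r m = carrier (alt_group (d n))"
proof -
  let ?A = "alt_group (d n)" and ?a = "alpha_n d n" and ?b = "beta_n r n"
  interpret A: group ?A by (rule alt_group_is_group)
  have a: "?a \<in> carrier ?A" and b: "?b \<in> carrier ?A"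
    using alpha_n_in_alt_group beta_n_in_alt_group d_odd r_pos d_r n_pos by auto
  have d_ge5_n: "5 \<le> d n" by (rule d_ge5[OF n_pos])
  then have d_le_m: "d n \<le> m"
    using self_le_mult_log2[of "real (d n)"] m_big by simp
  have "proj n ` L d r m = generate ?A (power_conjugates ?A ?a ?b {- int m..int m})"
    by (rule proj_L_eq_generate_power_conjugates[OF n_pos alpha_in_AltProd[OF d_odd]
          beta_in_AltProd[OF r_pos d_r]])
  also have "\<dots> = generate ?A (power_conjugates ?A ?a ?b UNIV)"
    using A.power_conjugates_periodic[OF a alpha_n_pow_order] d_ge5_n d_le_m by simp
  also have "\<dots> = carrier ?A"
    using A.perfect_generate_power_conjugates[OF a b gen] derived_alt_group_const[OF d_ge5_n]
    by simp
  finally show ?thesis .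
qed

end
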